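(* Let $n\ge1$ and let $\omega\in\mathbb{R}^n$ be non-resonant (i.e. $\langle k,\omega\rangle\notin\mathbb{Z}$ for all $k\in\mathbb{Z}^n\setminus\{0\}$). Suppose there exist $\tau\in\left[0,\frac{1}{n-1}\right)$ (with $\left[0,\frac{1}{n-1}\right)=[0,\infty)$ if $n=1$) and $C>0$ such that $T_{i+1}(\omega)\le C\,T_i(\omega)^{1+\tau}$ for all $i\ge0$. Then there is a constant $D>0$ such that for every $k\in\mathbb{Z}^n\setminus\{0\}$, $$\|\langle k,\omega\rangle\|_{\mathbb{Z}}\ge D\,|k|^{-(1+\mu)n},\qquad\text{where }\ \mu=\frac{n\tau}{n-(n-1)(1+\tau)}.$$
   Context: For $k\in\mathbb{Z}^n$, $|k|=\max_i|k_i|$; for $x\in\mathbb{R}$, $\|x\|_{\mathbb{Z}}=\min_{m\in\mathbb{Z}}|x-m|$; for $v\in\mathbb{R}^n$, $\|v\|_{\mathbb{Z}}=\min_{m\in\mathbb{Z}^n}|v-m|$. The periods of $\omega$ are $T_0(\omega)=1$ and $T_{i+1}(\omega)=\min\{T\in\mathbb{N},\,T\ge1:\|T\omega\|_{\mathbb{Z}}<\|T_i(\omega)\omega\|_{\mathbb{Z}}\}$ (all defined since $\omega$ is non-resonant). *)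

theory Defs
  imports "HOL-Analysis.Analysis"
begin

definition int_supnorm :: "int ^ 'n \<Rightarrow> int" where
  "int_supnorm k = Max (range (\<lambda>i. \<bar>k $ i\<bar>))"

definition ipair :: "int ^ 'n \<Rightarrow> real ^ 'n \<Rightarrow> real" where
  "ipair k w = (\<Sum>i\<in>UNIV. of_int (k $ i) * w $ i)"

definition zdist :: "real \<Rightarrow> real" where
  "zdist x = (INF m::int. \<bar>x - of_int m\<bar>)"

definition vzdist :: "real ^ 'n \<Rightarrow> real" where
  "vzdist v = (INF m::int ^ 'n. Max (range (\<lambda>i. \<bar>v $ i - of_int (m $ i)\<bar>)))"

definition non_resonant :: "real ^ 'n \<Rightarrow> bool" where
  "non_resonant w \<longleftrightarrow> (\<forall>k::int ^ 'n. k \<noteq> 0 \<longrightarrow> ipair k w \<notin> \<int>)"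

primrec periods :: "real ^ 'n \<Rightarrow> nat \<Rightarrow> nat" where
  "periods w 0 = 1"
| "periods w (Suc i) =
     (LEAST T::nat. T \<ge> 1 \<and> vzdist (real T *\<^sub>R w) < vzdist (real (periods w i) *\<^sub>R w))"

end

theory Submission
  imports Defs
begin

text \<open>
  Let \<open>\<epsilon> = \<parallel>\<langle>k,\<omega>\<rangle>\<parallel>\<close> and choose \<open>j\<close> with \<open>T\<^sub>j \<epsilon> \<le> 1/2 < T\<^sub>j\<^sub>+\<^sub>1 \<epsilon>\<close>. As \<open>T\<^sub>j \<epsilon> \<le> 1/2\<close>,
  no integer is closer to \<open>\<langle>k, T\<^sub>j \<omega>\<rangle>\<close> than \<open>T\<^sub>j \<epsilon>\<close>; taking the integer \<open>\<langle>k,m\<rangle>\<close> for a lattice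
  point \<open>m\<close> nearest to \<open>T\<^sub>j \<omega>\<close> gives \<open>T\<^sub>j \<epsilon> \<le> n |k| \<parallel>T\<^sub>j \<omega>\<parallel>\<close>. Minimality of \<open>T\<^sub>j\<^sub>+\<^sub>1\<close>
  combined with Dirichlet's theorem gives \<open>\<parallel>T\<^sub>j \<omega>\<parallel> \<le> 2 T\<^sub>j\<^sub>+\<^sub>1\<^sup>-\<^sup>1\<^sup>/\<^sup>n\<close>, and the growth
  hypothesis gives \<open>T\<^sub>j \<ge> (T\<^sub>j\<^sub>+\<^sub>1/C)\<^sup>1\<^sup>/\<^sup>(\<^sup>1\<^sup>+\<^sup>\<tau>\<^sup>)\<close>. Eliminating \<open>T\<^sub>j\<close> and using
  \<open>T\<^sub>j\<^sub>+\<^sub>1 > 1/(2\<epsilon>)\<close> bounds \<open>\<epsilon>\<^sup>1\<^sup>-\<^sup>b\<close> with \<open>b = 1/n + 1/(1+\<tau>)\<close>; the hypothesis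
  \<open>\<tau> < 1/(n-1)\<close> says exactly that \<open>b > 1\<close>.
\<close>

lemma abs_sub_round_le_half: "\<bar>x - of_int (round x)\<bar> \<le> (1/2::real)"
  using of_int_round_abs_le[of x] by (simp add: abs_minus_commute)

lemma abs_sub_round_le: "\<bar>(x::real) - of_int (round x)\<bar> \<le> \<bar>x - of_int m\<bar>"
proof (cases "m = round x")
  case False
  then have "\<bar>of_int (round x) - of_int m\<bar> \<ge> (1::real)"
    by (metis of_int_1_le_iff of_int_abs of_int_diff zabs_less_one_iff linorder_not_le right_minus_eq)
  then show ?thesis
    using abs_sub_round_le_half[of x] by linarith
qed simp

lemma zdist_eq_abs_round: "zdist x = \<bar>x - of_int (round x)\<bar>"
  unfolding zdist_def
proof (rule antisym)
  show "(INF m::int. \<bar>x - of_int m\<bar>) \<le> \<bar>x - of_int (round x)\<bar>"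
    by (rule cINF_lower) (auto intro: bdd_belowI[where m=0])
  show "\<bar>x - of_int (round x)\<bar> \<le> (INF m::int. \<bar>x - of_int m\<bar>)"
    by (rule cINF_greatest) (auto simp: abs_sub_round_le)
qed

lemma zdist_le_half: "zdist x \<le> 1/2"
  unfolding zdist_eq_abs_round by (rule abs_sub_round_le_half)

lemma zdist_pos:
  assumes "x \<notin> \<int>"
  shows "zdist x > 0"
proof -
  have "x \<noteq> of_int (round x)"
    using assms by (metis Ints_of_int)
  then show ?thesis
    by (simp add: zdist_eq_abs_round)
qed

definition lattice_dist :: "real ^ 'n \<Rightarrow> int ^ 'n \<Rightarrow> real" where
  "lattice_dist v m = Max (range (\<lambda>i. \<bar>v $ i - of_int (m $ i)\<bar>))"

lemma vzdist_eq_INF_lattice_dist: "vzdist v = (INF m. lattice_dist v m)"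
  by (simp add: vzdist_def lattice_dist_def)

lemma abs_component_le_lattice_dist: "\<bar>v $ i - of_int (m $ i)\<bar> \<le> lattice_dist v m"
  unfolding lattice_dist_def by (rule Max_ge) auto

lemma lattice_dist_le_iff: "lattice_dist v m \<le> c \<longleftrightarrow> (\<forall>i. \<bar>v $ i - of_int (m $ i)\<bar> \<le> c)"
  unfolding lattice_dist_def by (subst Max_le_iff) auto

lemma vzdist_le_lattice_dist: "vzdist v \<le> lattice_dist v m"
  unfolding vzdist_eq_INF_lattice_dist
proof (rule cINF_lower)
  show "bdd_below (range (lattice_dist v))"
    by (rule bdd_belowI[where m=0])
       (auto intro: order_trans[OF abs_ge_zero abs_component_le_lattice_dist])
qed simp

lemma vzdist_greatest: "(\<And>m. c \<le> lattice_dist v m) \<Longrightarrow> c \<le> vzdist v"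
  unfolding vzdist_eq_INF_lattice_dist by (rule cINF_greatest) auto

lemma vzdist_le_half: "vzdist v \<le> 1/2"
proof -
  have "vzdist v \<le> lattice_dist v (\<chi> i. round (v $ i))"
    by (rule vzdist_le_lattice_dist)
  also have "\<dots> \<le> 1/2"
    unfolding lattice_dist_le_iff vec_lambda_beta by (intro allI abs_sub_round_le_half)
  finally show ?thesis .
qed

lemma zdist_component_le_vzdist: "zdist (v $ i) \<le> vzdist v"
  by (rule vzdist_greatest)
     (use abs_sub_round_le abs_component_le_lattice_dist order_trans
      in \<open>fastforce simp: zdist_eq_abs_round\<close>)

lemma abs_diff_le_if_floor_mult_eq:
  fixes a b Q :: real
  assumes "Q > 0" "\<lfloor>Q * a\<rfloor> = \<lfloor>Q * b\<rfloor>"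
  shows "\<bar>a - b\<bar> \<le> 1 / Q"
proof -
  have "\<bar>Q * a - Q * b\<bar> < 1"
    using assms(2) by linarith
  then have "Q * \<bar>a - b\<bar> \<le> 1"
    using assms(1) by (simp add: abs_mult right_diff_distrib[symmetric])
  then show ?thesis
    using assms(1) by (simp add: field_simps)
qed

text \<open>Pigeonhole on the cells \<open>\<lfloor>Q frac(t \<omega>\<^sub>i)\<rfloor>\<close> for \<open>t = 0, \<dots>, Q\<^sup>n\<close>.\<close>

lemma dirichlet_simultaneous_approximation:
  fixes w :: "real ^ 'n" and Q :: nat
  assumes Q: "Q \<ge> 1"
  shows "\<exists>T::nat. 1 \<le> T \<and> T \<le> Q ^ CARD('n) \<and> vzdist (real T *\<^sub>R w) \<le> 1 / real Q"
proof -
  define cell where "cell t = (\<lambda>i::'n. \<lfloor>real Q * frac (real t * w $ i)\<rfloor>)" for t :: nat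
  define cells where "cells = (\<Pi>\<^sub>E i\<in>(UNIV::'n set). {0..<int Q})"
  have "cell ` {0..Q ^ CARD('n)} \<subseteq> cells"
    using Q frac_lt_1 by (auto simp: cells_def cell_def floor_less_iff)
  moreover have "finite cells" "card cells = Q ^ CARD('n)"
    by (simp_all add: cells_def finite_PiE card_PiE)
  ultimately have "card (cell ` {0..Q ^ CARD('n)}) \<le> Q ^ CARD('n)"
    by (metis card_mono)
  then have "\<not> inj_on cell {0..Q ^ CARD('n)}"
    by (intro pigeonhole) simp
  then obtain t1 t2 where t: "t1 \<le> Q ^ CARD('n)" "t2 \<le> Q ^ CARD('n)" "t1 \<noteq> t2" "cell t1 = cell t2"
    unfolding inj_on_def by auto
  have close: "\<exists>T::nat. 1 \<le> T \<and> T \<le> Q ^ CARD('n) \<and> vzdist (real T *\<^sub>R w) \<le> 1 / real Q"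
    if "s < t" "t \<le> Q ^ CARD('n)" "cell s = cell t" for s t
  proof (intro exI conjI)
    show "1 \<le> t - s" "t - s \<le> Q ^ CARD('n)"
      using that by auto
    define m where "m = (\<chi> i. \<lfloor>real t * w $ i\<rfloor> - \<lfloor>real s * w $ i\<rfloor>)"
    have "\<bar>(real (t - s) *\<^sub>R w) $ i - of_int (m $ i)\<bar> \<le> 1 / real Q" for i
    proof -
      have "\<lfloor>real Q * frac (real t * w $ i)\<rfloor> = \<lfloor>real Q * frac (real s * w $ i)\<rfloor>"
        using fun_cong[OF that(3), of i] by (simp add: cell_def)
      then have "\<bar>frac (real t * w $ i) - frac (real s * w $ i)\<bar> \<le> 1 / real Q"
        using Q by (intro abs_diff_le_if_floor_mult_eq) auto
      then show ?thesis
        using that(1) by (simp add: m_def frac_def of_nat_diff algebra_simps)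
    qed
    then have "lattice_dist (real (t - s) *\<^sub>R w) m \<le> 1 / real Q"
      by (simp add: lattice_dist_le_iff)
    then show "vzdist (real (t - s) *\<^sub>R w) \<le> 1 / real Q"
      using vzdist_le_lattice_dist order_trans by blast
  qed
  from t show ?thesis
    by (metis close linorder_neqE_nat)
qed

lemma exists_vzdist_less:
  fixes w :: "real ^ 'n"
  assumes "d > 0"
  shows "\<exists>T::nat. 1 \<le> T \<and> vzdist (real T *\<^sub>R w) < d"
proof -
  define Q where "Q = nat \<lceil>1 / d\<rceil> + 1"
  have Q: "Q \<ge> 1"
    by (simp add: Q_def)
  have "real Q > 1 / d"
    unfolding Q_def by linarith
  then have "1 / real Q < d"
    using assms Q by (simp add: field_simps)
  with Q show ?thesis
    using dirichlet_simultaneous_approximation[of Q w] by force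
qed

lemma non_resonant_vzdist_pos:
  fixes w :: "real ^ 'n"
  assumes nr: "non_resonant w" and T: "T \<ge> 1"
  shows "vzdist (real T *\<^sub>R w) > 0"
proof -
  obtain i :: 'n where True by blast
  define k where "k = (\<chi> l. if l = i then int T else 0)"
  have "k \<noteq> 0"
    using T by (auto simp: k_def vec_eq_iff intro!: exI[of _ i])
  moreover have "ipair k w = (\<Sum>l\<in>UNIV. if l = i then real T * w $ i else 0)"
    unfolding ipair_def k_def by (rule sum.cong) auto
  then have "ipair k w = real T * w $ i"
    by simp
  ultimately have "zdist ((real T *\<^sub>R w) $ i) > 0"
    using nr zdist_pos unfolding non_resonant_def by fastforce
  then show ?thesis
    using zdist_component_le_vzdist by (rule less_le_trans)
qed

declare periods.simps(2) [simp del]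

lemma periods_Suc_spec:
  fixes w :: "real ^ 'n"
  assumes "non_resonant w" "periods w j \<ge> 1"
  shows "periods w (Suc j) \<ge> 1 \<and>
         vzdist (real (periods w (Suc j)) *\<^sub>R w) < vzdist (real (periods w j) *\<^sub>R w)"
proof -
  have "\<exists>T::nat. 1 \<le> T \<and> vzdist (real T *\<^sub>R w) < vzdist (real (periods w j) *\<^sub>R w)"
    using assms by (intro exists_vzdist_less non_resonant_vzdist_pos)
  then show ?thesis
    unfolding periods.simps(2) by (rule LeastI_ex)
qed

lemma periods_ge_one:
  assumes "non_resonant w"
  shows "periods w j \<ge> 1"
  by (induction j) (use periods_Suc_spec[OF assms] in auto)

lemma vzdist_periods_Suc_less:
  "non_resonant w \<Longrightarrow> vzdist (real (periods w (Suc j)) *\<^sub>R w) < vzdist (real (periods w j) *\<^sub>R w)"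
  using periods_Suc_spec periods_ge_one by blast

lemma vzdist_periods_le_if_less_periods_Suc:
  assumes "1 \<le> T" "T < periods w (Suc j)"
  shows "vzdist (real (periods w j) *\<^sub>R w) \<le> vzdist (real T *\<^sub>R w)"
  using not_less_Least[of T] assms unfolding periods.simps(2) by fastforce

lemma periods_unbounded:
  assumes "non_resonant w"
  shows "\<exists>j. B < periods w j"
proof (rule ccontr)
  assume "\<not> ?thesis"
  then have "finite (range (periods w))"
    by (auto intro: finite_subset[of _ "{..B}"] simp: not_less)
  moreover have "strict_mono (\<lambda>j. - vzdist (real (periods w j) *\<^sub>R w))"
    by (rule strict_monoI_Suc) (simp add: vzdist_periods_Suc_less[OF assms])
  then have "inj (\<lambda>j. - vzdist (real (periods w j) *\<^sub>R w))"
    by (rule strict_mono_imp_inj_on)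
  then have "inj (periods w)"
    by (auto simp: inj_def)
  ultimately show False
    using finite_imageD by fastforce
qed

text \<open>Dirichlet's theorem with \<open>Q \<approx> T\<^sub>j\<^sub>+\<^sub>1\<^sup>1\<^sup>/\<^sup>n/2\<close> produces a return time below \<open>T\<^sub>j\<^sub>+\<^sub>1\<close>.\<close>

lemma vzdist_periods_le_powr:
  fixes w :: "real ^ 'n"
  assumes nr: "non_resonant w"
  shows "vzdist (real (periods w j) *\<^sub>R w) \<le> 2 * real (periods w (Suc j)) powr (- 1 / real CARD('n))"
proof -
  define A where "A = real (periods w (Suc j))"
  define r where "r = A powr (1 / real CARD('n))"
  have A1: "A \<ge> 1"
    using periods_ge_one[OF nr] by (simp add: A_def)
  then have r1: "r \<ge> 1"
    by (simp add: r_def ge_one_powr_ge_zero)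
  have rhs: "2 * A powr (- 1 / real CARD('n)) = 2 / r"
    by (simp add: r_def powr_minus_divide)
  have r_power: "r ^ CARD('n) = A"
    using r1 A1 by (simp add: r_def powr_realpow[symmetric] powr_powr)
  show ?thesis
  proof (cases "r < 2")
    case True
    have "vzdist (real (periods w j) *\<^sub>R w) \<le> 1/2"
      by (rule vzdist_le_half)
    also have "1/2 \<le> 2 / r"
      using True r1 by (simp add: field_simps)
    finally show ?thesis
      using rhs by (simp add: A_def)
  next
    case False
    define Q where "Q = nat \<lceil>r / 2\<rceil>"
    have Q: "real Q \<ge> r / 2" "real Q < r" "Q \<ge> 1"
      using False by (auto simp: Q_def) linarith+
    obtain T where T: "1 \<le> T" "T \<le> Q ^ CARD('n)" "vzdist (real T *\<^sub>R w) \<le> 1 / real Q"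
      using dirichlet_simultaneous_approximation[OF Q(3), of w] by blast
    have "real Q ^ CARD('n) < r ^ CARD('n)"
      by (rule power_strict_mono) (use Q in auto)
    then have "real T < A"
      using T(2) r_power by (metis of_nat_le_iff of_nat_power order.strict_trans1)
    then have "T < periods w (Suc j)"
      by (simp add: A_def)
    then have "vzdist (real (periods w j) *\<^sub>R w) \<le> 1 / real Q"
      using T vzdist_periods_le_if_less_periods_Suc order_trans by blast
    also have "\<dots> \<le> 2 / r"
      using Q r1 by (simp add: field_simps)
    finally show ?thesis
      using rhs by (simp add: A_def)
  qed
qed

subsection \<open>Transference to linear forms\<close>

lemma abs_le_int_supnorm: "\<bar>k $ i\<bar> \<le> int_supnorm k"
  unfolding int_supnorm_def by (rule Max_ge) auto

lemma abs_ipair_sub_le_lattice_dist: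
  fixes k :: "int ^ 'n"
  shows "\<bar>ipair k v - of_int (\<Sum>i\<in>UNIV. k $ i * m $ i)\<bar>
           \<le> real CARD('n) * of_int (int_supnorm k) * lattice_dist v m"
proof -
  have "\<bar>ipair k v - of_int (\<Sum>i\<in>UNIV. k $ i * m $ i)\<bar>
          = \<bar>\<Sum>i\<in>UNIV. of_int (k $ i) * (v $ i - of_int (m $ i))\<bar>"
    by (simp add: ipair_def right_diff_distrib sum_subtractf)
  also have "\<dots> \<le> (\<Sum>i\<in>UNIV. \<bar>of_int (k $ i)\<bar> * \<bar>v $ i - of_int (m $ i)\<bar>)"
    by (rule order_trans[OF sum_abs]) (simp add: abs_mult)
  also have "\<dots> \<le> (\<Sum>i\<in>(UNIV::'n set). of_int (int_supnorm k) * lattice_dist v m)"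
  proof (intro sum_mono mult_mono abs_component_le_lattice_dist)
    show "\<bar>of_int (k $ i)\<bar> \<le> (of_int (int_supnorm k) :: real)" for i
      using abs_le_int_supnorm[of k i] by (metis of_int_abs of_int_le_iff)
    then show "0 \<le> (of_int (int_supnorm k) :: real)"
      by (meson abs_ge_zero order_trans)
  qed simp
  finally show ?thesis
    by simp
qed

lemma mult_zdist_ipair_le_vzdist:
  fixes k :: "int ^ 'n" and w :: "real ^ 'n" and T :: nat
  assumes half: "real T * zdist (ipair k w) \<le> 1/2"
  shows "real T * zdist (ipair k w) \<le> real CARD('n) * of_int (int_supnorm k) * vzdist (real T *\<^sub>R w)"
proof -
  define K where "K = real CARD('n) * of_int (int_supnorm k)"
  define x where "x = ipair k w"
  have bound: "real T * zdist x \<le> K * lattice_dist (real T *\<^sub>R w) m" for m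
  proof -
    define s where "s = ipair k (real T *\<^sub>R w) - of_int (\<Sum>i\<in>UNIV. k $ i * m $ i)"
    define z where "z = int T * round x - (\<Sum>i\<in>UNIV. k $ i * m $ i)"
    have s_bound: "\<bar>s\<bar> \<le> K * lattice_dist (real T *\<^sub>R w) m"
      unfolding s_def K_def by (rule abs_ipair_sub_le_lattice_dist)
    have z_eq: "of_int z = s - real T * (x - of_int (round x))"
      by (simp add: z_def s_def x_def ipair_def sum_distrib_left algebra_simps)
    have T_zdist: "\<bar>real T * (x - of_int (round x))\<bar> = real T * zdist x"
      by (simp add: zdist_eq_abs_round abs_mult)
    have "real T * zdist x \<le> \<bar>s\<bar>"
    proof (cases "z = 0")
      case True
      then show ?thesis
        using z_eq T_zdist by simp
    next
      case False
      then have "1 \<le> \<bar>real_of_int z\<bar>"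
        by linarith
      moreover have "real T * zdist x \<le> 1/2"
        using half by (simp add: x_def)
      ultimately show ?thesis
        using z_eq T_zdist by linarith
    qed
    with s_bound show ?thesis
      by linarith
  qed
  have "int_supnorm k \<ge> 0"
    using abs_le_int_supnorm[of k undefined] by linarith
  then have "K \<ge> 0"
    by (simp add: K_def)
  then have "real T * zdist x \<le> K * vzdist (real T *\<^sub>R w)"
  proof (cases "K = 0")
    case False
    with \<open>K \<ge> 0\<close> have "real T * zdist x / K \<le> vzdist (real T *\<^sub>R w)"
      by (intro vzdist_greatest) (use bound in \<open>simp add: divide_le_eq mult.commute\<close>)
    with \<open>K \<ge> 0\<close> False show ?thesis
      by (simp add: divide_le_eq mult.commute)
  qed (use bound[of 0] in simp)
  then show ?thesis
    by (simp add: K_def x_def)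
qed

lemma exists_crossing_index:
  fixes f :: "nat \<Rightarrow> 'a::linorder"
  assumes "f 0 \<le> c" "c < f i"
  shows "\<exists>j. f j \<le> c \<and> c < f (Suc j)"
  using ex_least_nat_less[of "\<lambda>i. c < f i" i] assms by (auto simp: not_less)

text \<open>
  The growth bound gives \<open>T \<ge> (A/C)\<^sup>s\<close> with \<open>s = 1/(1+\<tau>)\<close>, hence
  \<open>\<epsilon> \<le> 2 N C\<^sup>s A\<^sup>-\<^sup>b \<le> 2 N C\<^sup>s (2\<epsilon>)\<^sup>b\<close>, i.e. \<open>\<epsilon>\<^sup>1\<^sup>-\<^sup>b \<le> 2\<^sup>b\<^sup>+\<^sup>1 C\<^sup>s N\<close>.
\<close>

lemma lower_bound_from_growth:
  fixes eps T A N C \<tau> n b :: real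
  assumes eps: "eps > 0" and T1: "T \<ge> 1" and A1: "A \<ge> 1" and N: "N > 0" and C: "C > 0"
    and tau: "\<tau> \<ge> 0" and n: "n > 0"
    and approx: "T * eps \<le> N * (2 * A powr (-1/n))"
    and growth: "A \<le> C * T powr (1+\<tau>)"
    and large: "1 < 2 * A * eps"
    and b_def: "b = 1/n + 1/(1+\<tau>)" and b1: "b > 1"
  shows "(2 powr (b+1) * C powr (1/(1+\<tau>)) * N) powr (-1/(b-1)) \<le> eps"
proof -
  define s where "s = 1/(1+\<tau>)"
  have s0: "s > 0"
    using tau by (simp add: s_def)
  have "(A / C) powr s \<le> (T powr (1+\<tau>)) powr s"
    by (rule powr_mono2) (use s0 growth C A1 in \<open>auto simp: divide_le_eq mult.commute\<close>)
  also have "\<dots> = T"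
    using T1 tau by (simp add: powr_powr s_def)
  finally have T_ge: "A powr s / C powr s \<le> T"
    by (simp add: powr_divide)
  have "eps * (A powr s / C powr s) \<le> T * eps"
    using mult_left_mono[OF T_ge, of eps] eps by (simp add: mult.commute)
  also note approx
  finally have "eps * A powr s \<le> 2 * N * C powr s * A powr (-1/n)"
    using C by (simp add: field_simps)
  then have "eps \<le> 2 * N * C powr s * (A powr (-1/n) / A powr s)"
    using A1 by (simp add: field_simps)
  also have "A powr (-1/n) / A powr s = A powr (-b)"
    using A1 by (simp add: b_def s_def powr_diff[symmetric])
  also have "A powr (-b) \<le> (1 / (2 * eps)) powr (-b)"
    by (rule powr_mono2') (use b1 eps large in \<open>auto simp: divide_le_eq mult.commute mult.left_commute\<close>)
  also have "(1 / (2 * eps)) powr (-b) = 2 powr b * eps powr b"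
    using eps by (simp add: powr_minus_divide powr_divide powr_mult)
  finally have "eps \<le> 2 * N * C powr s * (2 powr b * eps powr b)"
    using N C by (simp add: mult_left_mono)
  then have "eps / eps powr b \<le> 2 powr (b+1) * C powr s * N"
    using eps by (simp add: divide_le_eq powr_add field_simps)
  then have eps_powr: "eps powr (1 - b) \<le> 2 powr (b+1) * C powr s * N"
    using eps by (simp add: powr_diff)
  have "(2 powr (b+1) * C powr s * N) powr (1/(1-b)) \<le> (eps powr (1 - b)) powr (1/(1-b))"
    by (rule powr_mono2') (use b1 eps eps_powr in auto)
  also have "\<dots> = eps"
    using b1 eps by (simp add: powr_powr)
  also have "1/(1-b) = -1/(b-1)"
    using b1 by (simp add: field_simps)
  finally show ?thesis
    by (simp add: s_def)
qed

lemma zdist_ipair_ge_powr_int_supnorm: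
  fixes w :: "real ^ 'n" and k :: "int ^ 'n" and \<tau> C b :: real
  assumes nr: "non_resonant w" and tau: "\<tau> \<ge> 0" and C: "C > 0"
    and growth: "\<forall>i. real (periods w (Suc i)) \<le> C * real (periods w i) powr (1 + \<tau>)"
    and b_def: "b = 1 / real CARD('n) + 1/(1+\<tau>)" and b1: "b > 1"
    and k: "k \<noteq> 0"
  shows "(2 powr (b+1) * C powr (1/(1+\<tau>)) * real CARD('n)) powr (-1/(b-1))
           * of_int (int_supnorm k) powr (-1/(b-1)) \<le> zdist (ipair k w)"
proof -
  define eps where "eps = zdist (ipair k w)"
  define K where "K = real_of_int (int_supnorm k)"
  obtain i where "k $ i \<noteq> 0"
    using k by (auto simp: vec_eq_iff)
  then have K1: "K \<ge> 1"
    using abs_le_int_supnorm[of k i] unfolding K_def by linarith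
  have eps0: "eps > 0"
    using nr k zdist_pos unfolding non_resonant_def eps_def by blast
  obtain j0 where "nat \<lceil>1 / (2 * eps)\<rceil> < periods w j0"
    using periods_unbounded[OF nr] by blast
  then have "1 / (2 * eps) < real (periods w j0)"
    by linarith
  then have "1/2 < real (periods w j0) * eps"
    using eps0 by (simp add: field_simps)
  moreover have "real (periods w 0) * eps \<le> 1/2"
    using zdist_le_half by (simp add: eps_def)
  ultimately obtain j where j: "real (periods w j) * eps \<le> 1/2" "1/2 < real (periods w (Suc j)) * eps"
    using exists_crossing_index[where f = "\<lambda>j. real (periods w j) * eps"] by blast
  have "real (periods w j) * eps \<le> real CARD('n) * K * vzdist (real (periods w j) *\<^sub>R w)"
    using mult_zdist_ipair_le_vzdist j(1) by (simp add: eps_def K_def)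
  also have "\<dots> \<le> real CARD('n) * K * (2 * real (periods w (Suc j)) powr (- 1 / real CARD('n)))"
    using K1 by (intro mult_left_mono vzdist_periods_le_powr[OF nr]) auto
  finally have "(2 powr (b+1) * C powr (1/(1+\<tau>)) * (real CARD('n) * K)) powr (-1/(b-1)) \<le> eps"
    using periods_ge_one[OF nr] j(2) K1
    by (intro lower_bound_from_growth[OF eps0 _ _ _ C tau _ _ growth[rule_format] _ b_def b1])
       (auto simp: mult_ac)
  then show ?thesis
    using K1 C by (simp add: K_def eps_def powr_mult[symmetric] mult.assoc)
qed

lemma exponent_gt_one_and_eq:
  fixes n \<tau> :: real
  assumes n: "n \<ge> 1" and tau: "\<tau> \<ge> 0" and small: "(n - 1) * \<tau> < 1"
  defines "b \<equiv> 1/n + 1/(1+\<tau>)"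
  shows "b > 1" and "- (1 + n * \<tau> / (n - (n - 1) * (1 + \<tau>))) * n = -1 / (b - 1)"
proof -
  have den: "n - (n - 1) * (1 + \<tau>) = 1 - (n - 1) * \<tau>"
    by (simp add: algebra_simps)
  have "n \<noteq> 0" "1 + \<tau> \<noteq> 0" "n + \<tau> * n \<noteq> 0"
    using n tau by (auto simp: add_nonneg_eq_0_iff)
  then have "b - 1 = (1 + \<tau> + n - n * (1 + \<tau>)) / (n * (1 + \<tau>))"
    unfolding b_def by (simp add: field_simps)
  also have "\<dots> = (1 - (n - 1) * \<tau>) / (n * (1 + \<tau>))"
    by (simp add: algebra_simps)
  finally have b_sub: "b - 1 = (1 - (n - 1) * \<tau>) / (n * (1 + \<tau>))" .
  moreover have "(1 - (n - 1) * \<tau>) / (n * (1 + \<tau>)) > 0"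
    using n tau small by (intro divide_pos_pos) auto
  ultimately show "b > 1"
    by linarith
  show "- (1 + n * \<tau> / (n - (n - 1) * (1 + \<tau>))) * n = -1 / (b - 1)"
    using n tau small unfolding den b_sub by (simp add: field_simps)
qed

theorem proposition3p10:
  fixes w :: "real ^ 'n" and \<tau> C :: real
  assumes "non_resonant w"
    and "\<tau> \<ge> 0"
    and "CARD('n) = 1 \<or> \<tau> < 1 / (real CARD('n) - 1)"
    and "C > 0"
    and "\<forall>i. real (periods w (Suc i)) \<le> C * real (periods w i) powr (1 + \<tau>)"
  shows "\<exists>D>0. \<forall>k::int ^ 'n. k \<noteq> 0 \<longrightarrow>
           zdist (ipair k w) \<ge> D * real_of_int (int_supnorm k) powr
             (- (1 + (real CARD('n) * \<tau>) / (real CARD('n) - (real CARD('n) - 1) * (1 + \<tau>)))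
              * real CARD('n))"
proof -
  define n where "n = real CARD('n)"
  define b where "b = 1/n + 1/(1+\<tau>)"
  have n: "n \<ge> 1"
    by (simp add: n_def)
  have "(n - 1) * \<tau> < 1"
  proof (cases "CARD('n) = 1")
    case False
    then have "n > 1"
      by (simp add: n_def Suc_lessI)
    moreover have "\<tau> < 1 / (n - 1)"
      using assms(3) False by (simp add: n_def)
    ultimately show ?thesis
      by (simp add: field_simps)
  qed (simp add: n_def)
  note exponent = exponent_gt_one_and_eq[OF n assms(2) this, folded b_def]
  show ?thesis
  proof (intro exI conjI allI impI)
    show "(2 powr (b+1) * C powr (1/(1+\<tau>)) * n) powr (-1/(b-1)) > 0"
      using assms(4) n by simp
    fix k :: "int ^ 'n"
    assume "k \<noteq> 0"
    then show "(2 powr (b+1) * C powr (1/(1+\<tau>)) * n) powr (-1/(b-1)) * real_of_int (int_supnorm k) powr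
             (- (1 + (real CARD('n) * \<tau>) / (real CARD('n) - (real CARD('n) - 1) * (1 + \<tau>)))
              * real CARD('n)) \<le> zdist (ipair k w)"
      using zdist_ipair_ge_powr_int_supnorm[OF assms(1,2,4,5) _ exponent(1)] exponent(2)
      by (simp add: n_def b_def)
  qed
qed

end
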